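(* Let $G$ act by isometries on a $\delta$-hyperbolic geodesic space $X$, let $\alpha\ge3\delta$ and let $U\subset G$ be $\alpha$-reduced at $p\in X$. Let $n\ge2$, let $w\equiv u_1\cdots u_n$ be a reduced word over $U\sqcup U^{-1}$, and set $x_0=p$, $x_i=u_1\cdots u_ip$ for $1\le i\le n$. Then: (i) $(x_{i-1},x_{i+1})_{x_i}+(x_i,x_{i+2})_{x_{i+1}}<|x_i-x_{i+1}|-2(\alpha+50\delta)$ for every $i\in\{1,\dots,n-2\}$; (ii) $|wp-p|\ge\frac12|u_1p-p|+\frac12|u_np-p|+2(n-1)(\alpha+40\delta)+4(n-1)\delta$; (iii) $(p,wp)_{x_i}\le(u_i^{-1}p,u_{i+1}p)_p+2\delta$ for every $i\in\{1,\dots,n-2\}$.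
   Context: Hyperbolicity: $(x,z)_t\ge\min\{(x,y)_t,(y,z)_t\}-\delta$ with Gromov product $(x,y)_z=\frac12(|x-z|+|y-z|-|x-y|)$. For $\alpha\ge3\delta$, a finite subset $U\subset G$ is $\alpha$-reduced at $p\in X$ if $U\cap U^{-1}=\varnothing$ and for every pair of distinct $u_1,u_2\in U\sqcup U^{-1}$, $(u_1p,u_2p)_p<\frac12\min\{|u_1p-p|,|u_2p-p|\}-\alpha-50\delta$. Words over $U\sqcup U^{-1}$ are evaluated in $G$. *)

theory Defs
  imports "HOL-Analysis.Analysis" "HOL-Algebra.Group"
begin

definition gprod :: "'x::metric_space \<Rightarrow> 'x \<Rightarrow> 'x \<Rightarrow> real" where
  "gprod x y z = (dist x z + dist y z - dist x y) / 2"

text \<open>Geodesic metric space (the whole type is the space).\<close>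
definition geodesic_space :: "'x::metric_space itself \<Rightarrow> bool" where
  "geodesic_space TYPE('x) \<longleftrightarrow>
     (\<forall>x y::'x. \<exists>\<gamma>::real \<Rightarrow> 'x. \<gamma> 0 = x \<and> \<gamma> (dist x y) = y \<and>
        (\<forall>s\<in>{0..dist x y}. \<forall>t\<in>{0..dist x y}. dist (\<gamma> s) (\<gamma> t) = \<bar>s - t\<bar>))"

definition hyperbolic :: "'x::metric_space itself \<Rightarrow> real \<Rightarrow> bool" where
  "hyperbolic TYPE('x) \<delta> \<longleftrightarrow>
     (\<forall>x y z t::'x. gprod x z t \<ge> min (gprod x y t) (gprod y z t) - \<delta>)"

definition isometric_action :: "('g, 'b) monoid_scheme \<Rightarrow> ('g \<Rightarrow> 'x::metric_space \<Rightarrow> 'x) \<Rightarrow> bool" where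
  "isometric_action G act \<longleftrightarrow>
     (\<forall>x. act \<one>\<^bsub>G\<^esub> x = x) \<and>
     (\<forall>g\<in>carrier G. \<forall>h\<in>carrier G. \<forall>x. act (g \<otimes>\<^bsub>G\<^esub> h) x = act g (act h x)) \<and>
     (\<forall>g\<in>carrier G. \<forall>x y. dist (act g x) (act g y) = dist x y)"

definition alpha_reduced ::
  "('g, 'b) monoid_scheme \<Rightarrow> ('g \<Rightarrow> 'x::metric_space \<Rightarrow> 'x) \<Rightarrow> real \<Rightarrow> real \<Rightarrow> 'g set \<Rightarrow> 'x \<Rightarrow> bool" where
  "alpha_reduced G act \<delta> \<alpha> U p \<longleftrightarrow>
     finite U \<and> U \<subseteq> carrier G \<and> U \<inter> (\<lambda>u. inv\<^bsub>G\<^esub> u) ` U = {} \<and>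
     (\<forall>u1\<in>U \<union> (\<lambda>u. inv\<^bsub>G\<^esub> u) ` U. \<forall>u2\<in>U \<union> (\<lambda>u. inv\<^bsub>G\<^esub> u) ` U. u1 \<noteq> u2 \<longrightarrow>
        gprod (act u1 p) (act u2 p) p
          < min (dist (act u1 p) p) (dist (act u2 p) p) / 2 - \<alpha> - 50 * \<delta>)"

definition wprod :: "('g, 'b) monoid_scheme \<Rightarrow> 'g list \<Rightarrow> 'g" where
  "wprod G ws = foldr (\<lambda>a b. a \<otimes>\<^bsub>G\<^esub> b) ws \<one>\<^bsub>G\<^esub>"

definition reduced_word :: "('g, 'b) monoid_scheme \<Rightarrow> 'g set \<Rightarrow> 'g list \<Rightarrow> bool" where
  "reduced_word G U ws \<longleftrightarrow>
     set ws \<subseteq> U \<union> (\<lambda>u. inv\<^bsub>G\<^esub> u) ` U \<and>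
     (\<forall>i. Suc i < length ws \<longrightarrow> ws ! Suc i \<noteq> inv\<^bsub>G\<^esub> (ws ! i))"

end

theory Submission
  imports Defs
begin

text \<open>The orbit points \<open>x\<^sub>0, \<dots>, x\<^sub>n\<close> form a chain whose turns \<open>(x\<^sub>i\<^sub>-\<^sub>1, x\<^sub>i\<^sub>+\<^sub>1)\<^sub>x\<^sub>i = (u\<^sub>i\<^sup>-\<^sup>1 p, u\<^sub>i\<^sub>+\<^sub>1 p)\<^sub>p\<close>
  are, by \<open>\<alpha>\<close>-reducedness, small compared with the adjacent steps \<open>|u\<^sub>i p - p|\<close>. In a
  \<open>\<delta>\<close>-hyperbolic space such a chain is a quasi-geodesic: inducting along the chain, the four-point
  condition keeps \<open>(x\<^sub>0, x\<^sub>k\<^sub>+\<^sub>1)\<^sub>x\<^sub>k\<close> within \<open>\<delta>\<close> of the turn at \<open>x\<^sub>k\<close>, and symmetrically from the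
  other end. Summing \<open>|x\<^sub>0 - x\<^sub>k\<^sub>+\<^sub>1| = |x\<^sub>0 - x\<^sub>k| + |x\<^sub>k - x\<^sub>k\<^sub>+\<^sub>1| - 2 (x\<^sub>0, x\<^sub>k\<^sub>+\<^sub>1)\<^sub>x\<^sub>k\<close> gives the
  growth estimate (ii), and one more four-point step combining both ends gives (iii).
  Only the four-point condition is used.\<close>

lemma gprod_commute: "gprod x y z = gprod y x z"
  by (simp add: gprod_def dist_commute)

lemma gprod_add_swap: "gprod a z b + gprod b z a = dist a b"
  by (simp add: gprod_def dist_commute field_simps)

lemma hyperbolic_delta_nonneg:
  assumes "hyperbolic TYPE('x::metric_space) \<delta>"
  shows "0 \<le> \<delta>"
proof -
  fix a :: 'x
  have "gprod a a a \<ge> min (gprod a a a) (gprod a a a) - \<delta>"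
    using assms unfolding hyperbolic_def by blast
  then show ?thesis by simp
qed

lemma hyperbolic_gprod_transfer:
  fixes a b q z :: "'x::metric_space"
  assumes "hyperbolic TYPE('x) \<delta>"
    and "gprod q b a \<le> s"
    and "gprod a z b + s + \<delta> < dist a b"
  shows "gprod q z b \<le> gprod a z b + \<delta>"
proof -
  have "gprod a z b \<ge> min (gprod a q b) (gprod q z b) - \<delta>"
    using assms(1) unfolding hyperbolic_def by blast
  moreover have "gprod a q b = dist a b - gprod q b a"
    using gprod_add_swap[of a q b] gprod_commute[of b q a] by (simp add: dist_commute)
  ultimately show ?thesis
    using assms(2,3) by (auto simp: min_def split: if_splits)
qed

locale hyperbolic_chain =
  fixes y :: "nat \<Rightarrow> 'x::metric_space" and m :: nat and \<delta> \<mu> :: real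
  assumes hyperbolic: "hyperbolic TYPE('x) \<delta>"
    and margin: "2 * \<delta> \<le> \<mu>"
    and turn_small: "\<And>j. 1 \<le> j \<Longrightarrow> j < m \<Longrightarrow>
      gprod (y (j - 1)) (y (j + 1)) (y j) < min (dist (y (j - 1)) (y j)) (dist (y j) (y (j + 1))) / 2 - \<mu>"
begin

lemma delta_nonneg: "0 \<le> \<delta>"
  using hyperbolic by (rule hyperbolic_delta_nonneg)

lemma turn_sum_lt:
  assumes "1 \<le> j" "j + 1 < m"
  shows "gprod (y (j - 1)) (y (j + 1)) (y j) + gprod (y j) (y (j + 2)) (y (j + 1))
           < dist (y j) (y (j + 1)) - 2 * \<mu>"
proof -
  have "gprod (y j) (y (j + 2)) (y (j + 1)) < min (dist (y j) (y (j + 1))) (dist (y (j + 1)) (y (j + 2))) / 2 - \<mu>"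
    using turn_small[of "j + 1"] assms by (simp add: numeral_2_eq_2)
  then show ?thesis
    using turn_small[of j] assms by (auto simp: min_def split: if_splits)
qed

lemma gprod_start_le:
  "1 \<le> k \<Longrightarrow> k < m \<Longrightarrow> gprod (y 0) (y (k + 1)) (y k) \<le> gprod (y (k - 1)) (y (k + 1)) (y k) + \<delta>"
proof (induction k)
  case 0
  then show ?case by simp
next
  case (Suc k)
  show ?case
  proof (cases "k = 0")
    case True
    then show ?thesis using delta_nonneg by simp
  next
    case False
    then have "gprod (y 0) (y (k + 1)) (y k) \<le> gprod (y (k - 1)) (y (k + 1)) (y k) + \<delta>"
      using Suc by simp
    moreover have "gprod (y (k - 1)) (y (k + 1)) (y k) + gprod (y k) (y (k + 2)) (y (k + 1)) + 2 * \<delta>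
                     < dist (y k) (y (k + 1))"
      using turn_sum_lt[of k] False Suc.prems margin delta_nonneg by simp
    ultimately have "gprod (y 0) (y (k + 2)) (y (k + 1)) \<le> gprod (y k) (y (k + 2)) (y (k + 1)) + \<delta>"
      by (intro hyperbolic_gprod_transfer[OF hyperbolic]) auto
    then show ?thesis by (simp add: numeral_2_eq_2)
  qed
qed

lemma dist_start_ge:
  "1 \<le> k \<Longrightarrow> k \<le> m \<Longrightarrow>
     dist (y 0) (y k) \<ge> dist (y 0) (y 1) / 2 + dist (y (k - 1)) (y k) / 2 + (real k - 1) * (2 * \<mu> - 2 * \<delta>)"
proof (induction k rule: dec_induct)
  case base
  then show ?case by simp
next
  case (step k)
  have "dist (y 0) (y (k + 1)) = dist (y 0) (y k) + dist (y k) (y (k + 1)) - 2 * gprod (y 0) (y (k + 1)) (y k)"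
    by (simp add: gprod_def dist_commute field_simps)
  moreover have "gprod (y 0) (y (k + 1)) (y k) \<le> gprod (y (k - 1)) (y (k + 1)) (y k) + \<delta>"
    using gprod_start_le step by simp
  moreover have "2 * gprod (y (k - 1)) (y (k + 1)) (y k)
                   \<le> dist (y (k - 1)) (y k) / 2 + dist (y k) (y (k + 1)) / 2 - 2 * \<mu>"
    using turn_small[of k] step by (simp add: min_def split: if_splits)
  moreover have "dist (y 0) (y k) \<ge> dist (y 0) (y 1) / 2 + dist (y (k - 1)) (y k) / 2 + (real k - 1) * (2 * \<mu> - 2 * \<delta>)"
    using step by simp
  ultimately have "dist (y 0) (y (k + 1)) \<ge> dist (y 0) (y 1) / 2 + dist (y k) (y (k + 1)) / 2
                     + ((real k - 1) * (2 * \<mu> - 2 * \<delta>) + 2 * \<mu> - 2 * \<delta>)"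
    by linarith
  moreover have "(real k - 1) * (2 * \<mu> - 2 * \<delta>) + 2 * \<mu> - 2 * \<delta> = (real (Suc k) - 1) * (2 * \<mu> - 2 * \<delta>)"
    by (simp add: algebra_simps)
  ultimately show ?case by simp
qed

lemma reverse: "hyperbolic_chain (\<lambda>k. y (m - k)) m \<delta> \<mu>"
proof
  fix j assume j: "1 \<le> j" "j < m"
  define k where "k = m - j"
  have k: "m - (j - 1) = k + 1" "m - (j + 1) = k - 1" "m - j = k" "1 \<le> k" "k < m"
    using j unfolding k_def by auto
  show "gprod (y (m - (j - 1))) (y (m - (j + 1))) (y (m - j))
               < min (dist (y (m - (j - 1))) (y (m - j))) (dist (y (m - j)) (y (m - (j + 1)))) / 2 - \<mu>"
    unfolding k(1-3) using turn_small[OF k(4,5)] by (simp add: gprod_commute dist_commute min.commute)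
qed (use hyperbolic margin in auto)

lemma gprod_end_le:
  assumes "1 \<le> k" "k < m"
  shows "gprod (y m) (y (k - 1)) (y k) \<le> gprod (y (k + 1)) (y (k - 1)) (y k) + \<delta>"
proof -
  interpret rev: hyperbolic_chain "\<lambda>k. y (m - k)" m \<delta> \<mu> by (rule reverse)
  have "m - (m - k + 1) = k - 1" "m - (m - k - 1) = k + 1" "m - (m - k) = k"
    using assms by auto
  then show ?thesis
    using rev.gprod_start_le[of "m - k"] assms by simp
qed

lemma gprod_endpoints_le:
  assumes "1 \<le> i" "i + 1 < m"
  shows "gprod (y 0) (y m) (y i) \<le> gprod (y (i - 1)) (y (i + 1)) (y i) + 2 * \<delta>"
proof -
  have "gprod (y m) (y i) (y (i + 1)) \<le> gprod (y i) (y (i + 2)) (y (i + 1)) + \<delta>"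
    using gprod_end_le[of "i + 1"] assms by (simp add: gprod_commute numeral_2_eq_2)
  moreover have start: "gprod (y (i + 1)) (y 0) (y i) \<le> gprod (y (i - 1)) (y (i + 1)) (y i) + \<delta>"
    using gprod_start_le[of i] assms by (simp add: gprod_commute)
  moreover have "gprod (y (i - 1)) (y (i + 1)) (y i) + gprod (y i) (y (i + 2)) (y (i + 1)) + 3 * \<delta>
                   < dist (y i) (y (i + 1))"
    using turn_sum_lt[OF assms] margin delta_nonneg by simp
  ultimately have "gprod (y m) (y 0) (y i) \<le> gprod (y (i + 1)) (y 0) (y i) + \<delta>"
    by (intro hyperbolic_gprod_transfer[OF hyperbolic]) (auto simp: dist_commute)
  then show ?thesis
    using start by (simp add: gprod_commute)
qed

end

lemma wprod_closed:
  assumes "group G" "set xs \<subseteq> carrier G"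
  shows "wprod G xs \<in> carrier G"
  using assms(2) unfolding wprod_def
  by (induction xs) (auto intro: monoid.m_closed[OF group.is_monoid[OF assms(1)]]
                          simp: monoid.one_closed[OF group.is_monoid[OF assms(1)]])

lemma wprod_snoc:
  assumes "group G" "set xs \<subseteq> carrier G" "a \<in> carrier G"
  shows "wprod G (xs @ [a]) = wprod G xs \<otimes>\<^bsub>G\<^esub> a"
  using assms(2)
proof (induction xs)
  case Nil
  then show ?case using assms by (simp add: wprod_def group.is_monoid monoid.l_one monoid.r_one)
next
  case (Cons b xs)
  then have "wprod G xs \<in> carrier G" "b \<in> carrier G"
    using wprod_closed[OF assms(1)] by auto
  then show ?case
    using Cons assms by (simp add: wprod_def group.is_monoid monoid.m_assoc)
qed

lemma wprod_take_Suc: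
  assumes "group G" "set ws \<subseteq> carrier G" "i < length ws"
  shows "wprod G (take (Suc i) ws) = wprod G (take i ws) \<otimes>\<^bsub>G\<^esub> ws ! i"
proof -
  have "set (take i ws) \<subseteq> carrier G"
    using set_take_subset assms(2) by (rule order_trans)
  moreover have "ws ! i \<in> carrier G"
    using nth_mem[OF assms(3)] assms(2) by blast
  ultimately show ?thesis
    unfolding take_Suc_conv_app_nth[OF assms(3)] by (rule wprod_snoc[OF assms(1)])
qed

lemma isometric_action_gprod:
  assumes "isometric_action G act" "g \<in> carrier G"
  shows "gprod (act g a) (act g b) (act g c) = gprod a b c"
  using assms by (simp add: isometric_action_def gprod_def)

lemma isometric_action_dist_inv:
  assumes "group G" "isometric_action G act" "u \<in> carrier G"
  shows "dist (act (inv\<^bsub>G\<^esub> u) p) p = dist (act u p) p"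
proof -
  have inv: "inv\<^bsub>G\<^esub> u \<in> carrier G"
    using group.inv_closed[OF assms(1,3)] .
  have "act u (act (inv\<^bsub>G\<^esub> u) p) = act (u \<otimes>\<^bsub>G\<^esub> inv\<^bsub>G\<^esub> u) p"
    using assms(2,3) inv unfolding isometric_action_def by simp
  also have "\<dots> = p"
    using assms(2) group.r_inv[OF assms(1,3)] unfolding isometric_action_def by simp
  finally have "dist (act (inv\<^bsub>G\<^esub> u) p) p = dist p (act u p)"
    using assms(2,3) unfolding isometric_action_def by metis
  then show ?thesis
    by (simp add: dist_commute)
qed

definition word_orbit :: "('g, 'b) monoid_scheme \<Rightarrow> ('g \<Rightarrow> 'x \<Rightarrow> 'x) \<Rightarrow> 'g list \<Rightarrow> 'x \<Rightarrow> nat \<Rightarrow> 'x"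
  where "word_orbit G act ws p i = act (wprod G (take i ws)) p"

context
  fixes G :: "('g, 'b) monoid_scheme" and act :: "'g \<Rightarrow> 'x::metric_space \<Rightarrow> 'x"
    and p :: 'x and ws :: "'g list"
  assumes group: "group G" and action: "isometric_action G act" and letters: "set ws \<subseteq> carrier G"
begin

private lemma prefix_closed: "wprod G (take i ws) \<in> carrier G"
  by (rule wprod_closed[OF group order_trans[OF set_take_subset letters]])

private lemma word_orbit_Suc:
  assumes "i < length ws"
  shows "word_orbit G act ws p (i + 1) = act (wprod G (take i ws)) (act (ws ! i) p)"
proof -
  have "ws ! i \<in> carrier G"
    using assms letters by auto
  then show ?thesis
    using action wprod_take_Suc[OF group letters assms] prefix_closed
    unfolding word_orbit_def by (simp add: isometric_action_def)
qed

lemma word_orbit_dist: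
  assumes "i < length ws"
  shows "dist (word_orbit G act ws p i) (word_orbit G act ws p (i + 1)) = dist (act (ws ! i) p) p"
  using action word_orbit_Suc[OF assms] prefix_closed
  unfolding word_orbit_def by (simp add: isometric_action_def dist_commute)

lemma word_orbit_gprod:
  assumes "1 \<le> i" "i < length ws"
  shows "gprod (word_orbit G act ws p (i - 1)) (word_orbit G act ws p (i + 1)) (word_orbit G act ws p i)
         = gprod (act (inv\<^bsub>G\<^esub> (ws ! (i - 1))) p) (act (ws ! i) p) p"
proof -
  interpret group G by (rule group)
  define g where "g = wprod G (take i ws)"
  define u where "u = ws ! (i - 1)"
  have u: "u \<in> carrier G" and g: "g \<in> carrier G"
    using assms letters prefix_closed unfolding g_def u_def by auto
  have "g = wprod G (take (i - 1) ws) \<otimes>\<^bsub>G\<^esub> u"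
    using wprod_take_Suc[OF group letters, of "i - 1"] assms unfolding g_def u_def by simp
  then have "wprod G (take (i - 1) ws) = g \<otimes>\<^bsub>G\<^esub> inv\<^bsub>G\<^esub> u"
    using u g prefix_closed by (simp add: m_assoc)
  then have "word_orbit G act ws p (i - 1) = act g (act (inv\<^bsub>G\<^esub> u) p)"
    using action g u unfolding word_orbit_def by (simp add: isometric_action_def)
  moreover have "word_orbit G act ws p (i + 1) = act g (act (ws ! i) p)"
    using word_orbit_Suc[OF assms(2)] unfolding g_def .
  moreover have "word_orbit G act ws p i = act g p"
    unfolding g_def word_orbit_def ..
  ultimately show ?thesis
    using isometric_action_gprod[OF action g] unfolding u_def by simp
qed

end

lemma reduced_word_carrier:
  assumes "group G" "U \<subseteq> carrier G" "reduced_word G U ws"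
  shows "set ws \<subseteq> carrier G"
  using assms group.inv_closed[OF assms(1)] unfolding reduced_word_def by blast

lemma reduced_word_orbit_chain:
  assumes "group G" "isometric_action G act" "hyperbolic TYPE('x::metric_space) \<delta>" "0 \<le> \<alpha>"
    and "alpha_reduced G act \<delta> \<alpha> U p" "reduced_word G U ws"
  shows "hyperbolic_chain (word_orbit G act ws (p :: 'x)) (length ws) \<delta> (\<alpha> + 50 * \<delta>)"
proof
  define V where "V = U \<union> (\<lambda>u. inv\<^bsub>G\<^esub> u) ` U"
  have U: "U \<subseteq> carrier G"
    using assms(5) unfolding alpha_reduced_def by blast
  have V_carrier: "V \<subseteq> carrier G"
    using U group.inv_closed[OF assms(1)] unfolding V_def by blast
  have V_inv: "inv\<^bsub>G\<^esub> u \<in> V" if "u \<in> V" for u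
    using that U group.inv_inv[OF assms(1)] unfolding V_def by (auto intro!: rev_image_eqI)
  have reduced: "\<And>u1 u2. u1 \<in> V \<Longrightarrow> u2 \<in> V \<Longrightarrow> u1 \<noteq> u2 \<Longrightarrow>
      gprod (act u1 p) (act u2 p) p < min (dist (act u1 p) p) (dist (act u2 p) p) / 2 - \<alpha> - 50 * \<delta>"
    using assms(5) unfolding alpha_reduced_def V_def by blast
  have ws: "set ws \<subseteq> V" "\<And>i. Suc i < length ws \<Longrightarrow> ws ! Suc i \<noteq> inv\<^bsub>G\<^esub> (ws ! i)"
    using assms(6) unfolding reduced_word_def V_def by auto
  have letters: "set ws \<subseteq> carrier G"
    using reduced_word_carrier[OF assms(1) U assms(6)] .
  fix j assume j: "1 \<le> j" "j < length ws"
  then obtain i where i: "j = Suc i"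
    by (cases j) auto
  have u: "ws ! i \<in> V" "ws ! j \<in> V"
    using ws(1) j i by auto
  have "ws ! j \<noteq> inv\<^bsub>G\<^esub> (ws ! i)"
    using ws(2)[of i] j i by simp
  then have "gprod (act (inv\<^bsub>G\<^esub> (ws ! i)) p) (act (ws ! j) p) p
               < min (dist (act (inv\<^bsub>G\<^esub> (ws ! i)) p) p) (dist (act (ws ! j) p) p) / 2 - \<alpha> - 50 * \<delta>"
    using reduced[OF V_inv[OF u(1)] u(2)] by auto
  moreover have "dist (act (inv\<^bsub>G\<^esub> (ws ! i)) p) p = dist (act (ws ! i) p) p"
    using isometric_action_dist_inv[OF assms(1,2)] u(1) V_carrier by blast
  ultimately have turn: "gprod (act (inv\<^bsub>G\<^esub> (ws ! (j - 1))) p) (act (ws ! j) p) p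
               < min (dist (act (ws ! (j - 1)) p) p) (dist (act (ws ! j) p) p) / 2 - (\<alpha> + 50 * \<delta>)"
    using i by simp
  have "dist (word_orbit G act ws p (j - 1)) (word_orbit G act ws p j) = dist (act (ws ! (j - 1)) p) p"
    using word_orbit_dist[OF assms(1,2) letters, of "j - 1" p] i j by simp
  then show "gprod (word_orbit G act ws p (j - 1)) (word_orbit G act ws p (j + 1)) (word_orbit G act ws p j)
             < min (dist (word_orbit G act ws p (j - 1)) (word_orbit G act ws p j))
                   (dist (word_orbit G act ws p j) (word_orbit G act ws p (j + 1))) / 2
               - (\<alpha> + 50 * \<delta>)"
    unfolding word_orbit_gprod[OF assms(1,2) letters j] word_orbit_dist[OF assms(1,2) letters j(2)]
    using turn by (simp only:)
qed (use assms(3,4) hyperbolic_delta_nonneg[OF assms(3)] in simp_all)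

theorem mainTheorem9:
  fixes G :: "('g, 'b) monoid_scheme"
    and act :: "'g \<Rightarrow> 'x::metric_space \<Rightarrow> 'x"
    and \<delta> \<alpha> :: real and U :: "'g set" and p :: 'x and ws :: "'g list" and n :: nat
  assumes "group G"
    and "isometric_action G act"
    and "geodesic_space TYPE('x)"
    and "hyperbolic TYPE('x) \<delta>"
    and "\<alpha> \<ge> 3 * \<delta>"
    and "alpha_reduced G act \<delta> \<alpha> U p"
    and "n \<ge> 2" and "length ws = n"
    and "reduced_word G U ws"
  defines "x \<equiv> (\<lambda>i. act (wprod G (take i ws)) p)"
  shows "(\<forall>i\<in>{1..n-2}.
            gprod (x (i - 1)) (x (i + 1)) (x i) + gprod (x i) (x (i + 2)) (x (i + 1))
              < dist (x i) (x (i + 1)) - 2 * (\<alpha> + 50 * \<delta>))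
       \<and> dist (act (wprod G ws) p) p
           \<ge> dist (act (ws ! 0) p) p / 2 + dist (act (ws ! (n - 1)) p) p / 2
             + 2 * (real n - 1) * (\<alpha> + 40 * \<delta>) + 4 * (real n - 1) * \<delta>
       \<and> (\<forall>i\<in>{1..n-2}.
            gprod p (act (wprod G ws) p) (x i)
              \<le> gprod (act (inv\<^bsub>G\<^esub> (ws ! (i - 1))) p) (act (ws ! i) p) p + 2 * \<delta>)"
proof -
  have \<delta>: "0 \<le> \<delta>"
    using assms(4) by (rule hyperbolic_delta_nonneg)
  have x: "x = word_orbit G act ws p"
    unfolding x_def word_orbit_def ..
  interpret hyperbolic_chain x n \<delta> "\<alpha> + 50 * \<delta>"
    unfolding x assms(8)[symmetric]
    by (rule reduced_word_orbit_chain[OF assms(1,2,4) _ assms(6,9)]) (use assms(5) \<delta> in linarith)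
  have letters: "set ws \<subseteq> carrier G"
    using assms(6) reduced_word_carrier[OF assms(1) _ assms(9)] unfolding alpha_reduced_def by blast
  have x0: "x 0 = p" and xn: "x n = act (wprod G ws) p"
    using assms(2,8) unfolding x_def wprod_def isometric_action_def by simp_all
  have "dist (x 0) (x n) \<ge> dist (x 0) (x 1) / 2 + dist (x (n - 1)) (x n) / 2
                               + (real n - 1) * (2 * (\<alpha> + 50 * \<delta>) - 2 * \<delta>)"
    using dist_start_ge[of n] assms(7) by simp
  moreover have "(real n - 1) * (2 * (\<alpha> + 50 * \<delta>) - 2 * \<delta>)
                   \<ge> 2 * (real n - 1) * (\<alpha> + 40 * \<delta>) + 4 * (real n - 1) * \<delta>"
    using mult_left_mono[of 1 "real n" \<delta>] assms(7) \<delta> by (simp add: algebra_simps)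
  ultimately have "dist (act (wprod G ws) p) p
           \<ge> dist (act (ws ! 0) p) p / 2 + dist (act (ws ! (n - 1)) p) p / 2
             + 2 * (real n - 1) * (\<alpha> + 40 * \<delta>) + 4 * (real n - 1) * \<delta>"
    using word_orbit_dist[OF assms(1,2) letters, of 0 p] word_orbit_dist[OF assms(1,2) letters, of "n - 1" p]
      assms(7,8) x0 xn x by (simp add: dist_commute)
  moreover have "gprod (x 0) (x n) (x i) \<le> gprod (act (inv\<^bsub>G\<^esub> (ws ! (i - 1))) p) (act (ws ! i) p) p + 2 * \<delta>"
    if "i \<in> {1..n-2}" for i
    using gprod_endpoints_le[of i] word_orbit_gprod[OF assms(1,2) letters, of i p] that assms(7,8) x by auto
  ultimately show ?thesis
    using turn_sum_lt x0 xn assms(7) by auto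
qed

end
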